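(* Let $I\ge 0$, $S\ge 1$ and $j$ be integers with $L(I,S)\le j\le\lfloor I/2\rfloor$, consider the pairing process described in the context, and fix a clean device $w_t$. Let $B$ be a set of $j$ bb-pairings that is the set of bb-pairings of some possible wiring. The number of possible wirings whose set of bb-pairings is exactly $B$ and in which $w_t$ is paired equals $S!$ if $(I,S,j)$ is in the dagger case, and equals $(I-2j)!\binom{S-1}{I-2j-1}$ otherwise, with the convention $\binom{A}{B}=0$ when $B<0$.
   Context: Pairing process: there are $I$ infected devices $b_1,\dots,b_I$ and $S$ clean devices $w_1,\dots,w_S$. For $t=1,\dots,I$ in this order: if $b_t$ is not yet paired and at least one device other than $b_t$ is not yet paired, then $b_t$ chooses one of the currently unpaired devices other than itself uniformly at random, independently of previous choices, and becomes paired with it; otherwise $b_t$ does nothing. Each device belongs to at most one pair. The wiring is the final set of pairs; a bb-pairing is a pair consisting of two infected devices; a wiring is possible if it occurs with positive probability. $L(I,S)=0$ if $I\le S$; $L(I,S)=\frac{I-S}{2}$ if $I>S$ and $I-S$ is even; $L(I,S)=\frac{I-S-1}{2}$ if $I>S$ and $I-S$ is odd. $(I,S,j)$ is in the dagger case if $I>S$, $I+S$ is odd and $j=\frac{I-S-1}{2}$. *)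

theory Defs
  imports Main
begin

text \<open>Devices: infected device b_i is Inl i (1 <= i <= I), clean device w_k is Inr k (1 <= k <= S).
A pair is a two-element set of devices; a wiring is a set of pairs.\<close>

type_synonym device = "nat + nat"

definition devices :: "nat \<Rightarrow> nat \<Rightarrow> device set" where
  "devices I S = Inl ` {1..I} \<union> Inr ` {1..S}"

definition unpaired :: "nat \<Rightarrow> nat \<Rightarrow> device set set \<Rightarrow> device set" where
  "unpaired I S P = devices I S - \<Union>P"

text \<open>reach I S t P: after infected devices b_1..b_t have acted, the current set of
pairs P occurs with positive probability (each uniform choice has positive probability).\<close>
inductive reach :: "nat \<Rightarrow> nat \<Rightarrow> nat \<Rightarrow> device set set \<Rightarrow> bool" for I S where
  start: "reach I S 0 {}"
| skip: "\<lbrakk> reach I S t P; t < I;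
           Inl (Suc t) \<notin> unpaired I S P \<or> \<not> (\<exists>d \<in> unpaired I S P. d \<noteq> Inl (Suc t)) \<rbrakk>
         \<Longrightarrow> reach I S (Suc t) P"
| choose: "\<lbrakk> reach I S t P; t < I; Inl (Suc t) \<in> unpaired I S P;
             d \<in> unpaired I S P; d \<noteq> Inl (Suc t) \<rbrakk>
         \<Longrightarrow> reach I S (Suc t) (insert {Inl (Suc t), d} P)"

definition possible_wiring :: "nat \<Rightarrow> nat \<Rightarrow> device set set \<Rightarrow> bool" where
  "possible_wiring I S W \<longleftrightarrow> reach I S I W"

definition bb_pairings :: "device set set \<Rightarrow> device set set" where
  "bb_pairings W = {p \<in> W. p \<subseteq> range Inl}"

definition L :: "nat \<Rightarrow> nat \<Rightarrow> nat" where
  "L I S = (if I \<le> S then 0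
            else if even (I - S) then (I - S) div 2 else (I - S - 1) div 2)"

definition dagger :: "nat \<Rightarrow> nat \<Rightarrow> nat \<Rightarrow> bool" where
  "dagger I S j \<longleftrightarrow> I > S \<and> odd (I + S) \<and> j = (I - S - 1) div 2"

definition binom_int :: "nat \<Rightarrow> int \<Rightarrow> nat" where
  "binom_int A B = (if B < 0 then 0 else A choose (nat B))"

end

theory Submission
  imports Defs "HOL-Library.FuncSet"
begin

text \<open>
  Which sets of pairs can occur is characterised statically: after b_1, ..., b_t have acted,
  every pair was formed by its smaller infected member a \<le> t choosing a device that was still
  free (so a partner b_c has c > a), the pairs are disjoint, and every unpaired b_i with
  i \<le> t found all other devices already taken by earlier choosers.

  Fix a possible wiring W with bb-pairings B and let R be the I - 2j infected devices not in
  a pair of B. In W each device of R is paired with its own clean device, except for at most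
  one unpaired device, which must be the last device of R and can only occur when all S clean
  devices are taken, i.e. when I - 2j = S + 1: the dagger case. Conversely, for the set M of
  devices of R that are paired in W (all of R, or R without its maximum in the dagger case),
  every injection of M into the clean devices yields a possible wiring with bb-pairings B. So
  the wirings in question correspond to the injections of M into the S clean devices that hit
  t, and there are |M|! (S-1 choose |M|-1) of them.
\<close>

section \<open>Injections hitting a given point\<close>

lemma prod_diff_eq_fact_binomial: "(\<Prod>i<m. n - i) = fact m * (n choose m)"
proof (induction m)
  case (Suc m)
  have "(n choose m) * (n - m) = (n choose Suc m) * Suc m"
    by (metis binomial_absorb_comp binomial_absorption mult.commute)
  then show ?case using Suc by (simp add: algebra_simps)
qed simp

lemma card_inj_on_funcset_hitting:
  assumes "finite A" "finite C" "t \<in> C"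
  shows "card {f \<in> A \<rightarrow>\<^sub>E C. inj_on f A \<and> t \<in> f ` A} =
    fact (card A) * binom_int (card C - 1) (int (card A) - 1)"
proof -
  define all where "all = {f \<in> A \<rightarrow>\<^sub>E C. inj_on f A}"
  define avoiding where "avoiding = {f \<in> A \<rightarrow>\<^sub>E C - {t}. inj_on f A}"
  have "avoiding \<subseteq> all"
    unfolding all_def avoiding_def by (auto simp: PiE_iff)
  moreover have "finite all"
    unfolding all_def using assms by (simp add: finite_PiE)
  moreover have "{f \<in> A \<rightarrow>\<^sub>E C. inj_on f A \<and> t \<in> f ` A} = all - avoiding"
    unfolding all_def avoiding_def by (auto simp: PiE_iff)
  ultimately have "card {f \<in> A \<rightarrow>\<^sub>E C. inj_on f A \<and> t \<in> f ` A} = card all - card avoiding"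
    by (simp add: card_Diff_subset finite_subset)
  also have "card all = fact (card A) * (card C choose card A)"
    unfolding all_def using assms
    by (simp add: card_inj_on_subset_funcset atLeast0LessThan prod_diff_eq_fact_binomial)
  also have "card avoiding = fact (card A) * ((card C - 1) choose card A)"
    unfolding avoiding_def using assms prod_diff_eq_fact_binomial[where m="card A" and n="card C - 1"]
    by (simp add: card_inj_on_subset_funcset atLeast0LessThan)
  also obtain c where "card C = Suc c"
    using assms by (metis card_Suc_Diff1)
  then have "fact (card A) * (card C choose card A) - fact (card A) * ((card C - 1) choose card A) =
      fact (card A) * binom_int (card C - 1) (int (card A) - 1)"
    by (cases "card A") (simp_all add: binom_int_def algebra_simps)
  finally show ?thesis .
qed

section \<open>Reachable states of the pairing process\<close>

lemma Inl_in_devices [simp]: "Inl a \<in> devices I S \<longleftrightarrow> a \<in> {1..I}"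
  and Inr_in_devices [simp]: "Inr k \<in> devices I S \<longleftrightarrow> k \<in> {1..S}"
  by (auto simp: devices_def)

definition initiates :: "nat \<Rightarrow> nat \<Rightarrow> nat \<Rightarrow> device set \<Rightarrow> bool" where
  "initiates I S a p \<longleftrightarrow> (\<exists>d. p = {Inl a, d} \<and> d \<in> devices I S \<and> (\<forall>c. d = Inl c \<longrightarrow> a < c))"

definition taken_before :: "nat \<Rightarrow> nat \<Rightarrow> device set set \<Rightarrow> nat \<Rightarrow> bool" where
  "taken_before I S P i \<longleftrightarrow>
     (\<forall>d \<in> devices I S - {Inl i}. \<exists>p\<in>P. d \<in> p \<and> (\<exists>a<i. Inl a \<in> p))"

definition admissible :: "nat \<Rightarrow> nat \<Rightarrow> nat \<Rightarrow> device set set \<Rightarrow> bool" where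
  "admissible I S t P \<longleftrightarrow> t \<le> I \<and>
     (\<forall>p\<in>P. \<exists>a\<in>{1..t}. initiates I S a p) \<and>
     (\<forall>p\<in>P. \<forall>q\<in>P. p \<inter> q \<noteq> {} \<longrightarrow> p = q) \<and>
     (\<forall>i\<in>{1..t}. Inl i \<notin> \<Union>P \<longrightarrow> taken_before I S P i)"

lemma admissibleI:
  assumes "t \<le> I"
    and "\<And>p. p \<in> P \<Longrightarrow> \<exists>a\<in>{1..t}. initiates I S a p"
    and "\<And>p q x. p \<in> P \<Longrightarrow> q \<in> P \<Longrightarrow> x \<in> p \<Longrightarrow> x \<in> q \<Longrightarrow> p = q"
    and "\<And>i. i \<in> {1..t} \<Longrightarrow> Inl i \<notin> \<Union>P \<Longrightarrow> taken_before I S P i"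
  shows "admissible I S t P"
  unfolding admissible_def using assms(1,2,4) assms(3) by blast

lemma
  assumes "admissible I S t P"
  shows admissible_le: "t \<le> I"
    and admissible_initiated: "p \<in> P \<Longrightarrow> \<exists>a\<in>{1..t}. initiates I S a p"
    and admissible_disjoint: "p \<in> P \<Longrightarrow> q \<in> P \<Longrightarrow> x \<in> p \<Longrightarrow> x \<in> q \<Longrightarrow> p = q"
    and admissible_taken_before: "i \<in> {1..t} \<Longrightarrow> Inl i \<notin> \<Union>P \<Longrightarrow> taken_before I S P i"
  using assms unfolding admissible_def by blast+

lemma taken_beforeD:
  "taken_before I S P i \<Longrightarrow> d \<in> devices I S \<Longrightarrow> d \<noteq> Inl i \<Longrightarrow> \<exists>p\<in>P. d \<in> p \<and> (\<exists>a<i. Inl a \<in> p)"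
  unfolding taken_before_def by blast

lemma taken_before_mono: "taken_before I S P i \<Longrightarrow> P \<subseteq> Q \<Longrightarrow> taken_before I S Q i"
  unfolding taken_before_def by blast

lemma initiates_Inl_mem: "initiates I S a p \<Longrightarrow> Inl a \<in> p"
  unfolding initiates_def by auto

lemma initiates_Inl_less: "initiates I S a p \<Longrightarrow> Inl c \<in> p \<Longrightarrow> a \<le> c"
  unfolding initiates_def by fastforce

text \<open>A free infected device b_c with c \<le> t would have found b_(t+1) free as well.\<close>
lemma admissible_choice_initiates:
  assumes "admissible I S t P" "t < I"
    and "Inl (Suc t) \<in> unpaired I S P" "d \<in> unpaired I S P" "d \<noteq> Inl (Suc t)"
  shows "initiates I S (Suc t) {Inl (Suc t), d}"
  unfolding initiates_def
proof (intro exI conjI allI impI)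
  fix c assume d: "d = Inl c"
  show "Suc t < c"
  proof (rule ccontr)
    assume "\<not> Suc t < c"
    then have c: "c \<in> {1..t}" using assms(4,5) d by (auto simp: unpaired_def)
    then have "taken_before I S P c"
      using admissible_taken_before[OF assms(1)] assms(4) d by (auto simp: unpaired_def)
    then show False
      using taken_beforeD[of I S P c "Inl (Suc t)"] assms(2,3) c by (auto simp: unpaired_def)
  qed
qed (use assms(4) in \<open>auto simp: unpaired_def\<close>)

lemma admissible_initiated_unique:
  assumes "admissible I S t P" "p \<in> P" "q \<in> P" "initiates I S a p" "initiates I S a q"
  shows "p = q"
  using admissible_disjoint[OF assms(1-3)] initiates_Inl_mem[OF assms(4)] initiates_Inl_mem[OF assms(5)]
  by blast

lemma reach_admissible: "reach I S t P \<Longrightarrow> admissible I S t P"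
proof (induction rule: reach.induct)
  case start
  show ?case by (simp add: admissible_def)
next
  case (skip t P)
  show ?case
  proof (rule admissibleI)
    show "Suc t \<le> I" using skip.hyps(2) by simp
    show "\<exists>a\<in>{1..Suc t}. initiates I S a p" if "p \<in> P" for p
      using admissible_initiated[OF skip.IH that] by auto
    show "p = q" if "p \<in> P" "q \<in> P" "x \<in> p" "x \<in> q" for p q x
      using admissible_disjoint[OF skip.IH that] .
    fix i assume i: "i \<in> {1..Suc t}" and free: "Inl i \<notin> \<Union>P"
    show "taken_before I S P i"
    proof (cases "i = Suc t")
      case True
      have "devices I S - {Inl i} \<subseteq> \<Union>P"
        using skip.hyps(2,3) free True by (auto simp: unpaired_def)
      moreover have "\<exists>a<i. Inl a \<in> p" if "p \<in> P" for p
        using admissible_initiated[OF skip.IH that] initiates_Inl_mem True by (auto simp: less_Suc_eq_le)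
      ultimately show ?thesis unfolding taken_before_def by blast
    next
      case False
      then show ?thesis using i free admissible_taken_before[OF skip.IH] by simp
    qed
  qed
next
  case (choose t P d)
  have free: "d \<notin> \<Union>P" "Inl (Suc t) \<notin> \<Union>P"
    using choose.hyps(3,4) by (auto simp: unpaired_def)
  have new: "initiates I S (Suc t) {Inl (Suc t), d}"
    using admissible_choice_initiates[OF choose.IH choose.hyps(2-5)] .
  show ?case
  proof (rule admissibleI)
    show "Suc t \<le> I" using choose.hyps(2) by simp
    show "\<exists>a\<in>{1..Suc t}. initiates I S a p" if "p \<in> insert {Inl (Suc t), d} P" for p
      using that new admissible_initiated[OF choose.IH] by fastforce
    show "p = q" if "p \<in> insert {Inl (Suc t), d} P" "q \<in> insert {Inl (Suc t), d} P"
      "x \<in> p" "x \<in> q" for p q x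
      using that free admissible_disjoint[OF choose.IH] by blast
    show "taken_before I S (insert {Inl (Suc t), d} P) i"
      if "i \<in> {1..Suc t}" "Inl i \<notin> \<Union>(insert {Inl (Suc t), d} P)" for i
      using that admissible_taken_before[OF choose.IH, of i]
      by (auto intro: taken_before_mono simp: le_Suc_eq)
  qed
qed

lemma admissible_0_empty: "admissible I S 0 P \<Longrightarrow> P = {}"
  using admissible_initiated by fastforce

lemma admissible_Suc_restrict:
  assumes "admissible I S (Suc t) P"
  shows "admissible I S t {p \<in> P. \<not> initiates I S (Suc t) p}"
proof (rule admissibleI)
  show "t \<le> I" using admissible_le[OF assms] by simp
  show "\<exists>a\<in>{1..t}. initiates I S a p" if "p \<in> {p \<in> P. \<not> initiates I S (Suc t) p}" for p
    using that admissible_initiated[OF assms] by (force simp: le_Suc_eq)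
  show "p = q" if "p \<in> {p \<in> P. \<not> initiates I S (Suc t) p}" "q \<in> {p \<in> P. \<not> initiates I S (Suc t) p}"
    "x \<in> p" "x \<in> q" for p q x
    using that admissible_disjoint[OF assms] by blast
  fix i assume i: "i \<in> {1..t}" and free: "Inl i \<notin> \<Union>{p \<in> P. \<not> initiates I S (Suc t) p}"
  have "Inl i \<notin> \<Union>P"
    using free i initiates_Inl_less[of I S "Suc t" _ i] by fastforce
  then have taken: "taken_before I S P i"
    using admissible_taken_before[OF assms] i by simp
  show "taken_before I S {p \<in> P. \<not> initiates I S (Suc t) p} i"
    unfolding taken_before_def
  proof
    fix d assume "d \<in> devices I S - {Inl i}"
    then obtain p a where p: "p \<in> P" "d \<in> p" "a < i" "Inl a \<in> p"
      using taken_beforeD[OF taken] by blast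
    moreover have "\<not> initiates I S (Suc t) p"
      using initiates_Inl_less[of I S "Suc t" p a] p i by auto
    ultimately show "\<exists>p\<in>{p \<in> P. \<not> initiates I S (Suc t) p}. d \<in> p \<and> (\<exists>a<i. Inl a \<in> p)"
      by blast
  qed
qed

lemma admissible_reach: "admissible I S t P \<Longrightarrow> reach I S t P"
proof (induction t arbitrary: P)
  case 0
  then show ?case using admissible_0_empty reach.start by blast
next
  case (Suc t)
  define Q where "Q = {p \<in> P. \<not> initiates I S (Suc t) p}"
  have reach_Q: "reach I S t Q"
    using Suc.IH admissible_Suc_restrict[OF Suc.prems] unfolding Q_def by blast
  have t: "t < I" using admissible_le[OF Suc.prems] by simp
  show ?case
  proof (cases "\<exists>p\<in>P. initiates I S (Suc t) p")
    case True
    then obtain d where p: "{Inl (Suc t), d} \<in> P" and d: "d \<in> devices I S" "\<forall>c. d = Inl c \<longrightarrow> Suc t < c"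
      unfolding initiates_def by blast
    have p_init: "initiates I S (Suc t) {Inl (Suc t), d}"
      using d unfolding initiates_def by blast
    then have "q \<inter> {Inl (Suc t), d} = {}" if "q \<in> Q" for q
      using that p admissible_disjoint[OF Suc.prems, of q "{Inl (Suc t), d}"]
      unfolding Q_def by blast
    then have "Inl (Suc t) \<in> unpaired I S Q" "d \<in> unpaired I S Q" "d \<noteq> Inl (Suc t)"
      using t d by (auto simp: unpaired_def)
    from reach.choose[OF reach_Q t this] have "reach I S (Suc t) (insert {Inl (Suc t), d} Q)" .
    moreover have "insert {Inl (Suc t), d} Q = P"
      using p p_init admissible_initiated_unique[OF Suc.prems] unfolding Q_def by blast
    ultimately show ?thesis by simp
  next
    case False
    then have "Q = P" unfolding Q_def by blast
    have "Inl (Suc t) \<notin> unpaired I S P \<or> \<not> (\<exists>d\<in>unpaired I S P. d \<noteq> Inl (Suc t))"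
    proof (cases "Inl (Suc t) \<in> \<Union>P")
      case False
      then have "taken_before I S P (Suc t)"
        using admissible_taken_before[OF Suc.prems] t by simp
      then show ?thesis unfolding taken_before_def unpaired_def by blast
    qed (simp add: unpaired_def)
    from reach.skip[OF reach_Q[unfolded \<open>Q = P\<close>] t this] show ?thesis .
  qed
qed

lemma possible_wiring_iff_admissible: "possible_wiring I S W \<longleftrightarrow> admissible I S I W"
  unfolding possible_wiring_def using reach_admissible admissible_reach by blast

section \<open>Possible wirings with prescribed bb-pairings\<close>

definition bb_infected :: "device set set \<Rightarrow> nat set" where
  "bb_infected B = {i. Inl i \<in> \<Union>B}"

definition free_infected :: "nat \<Rightarrow> device set set \<Rightarrow> nat set" where
  "free_infected I B = {1..I} - bb_infected B"

definition unpaired_infected :: "nat \<Rightarrow> device set set \<Rightarrow> nat set" where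
  "unpaired_infected I W = {i \<in> {1..I}. Inl i \<notin> \<Union>W}"

definition partner :: "device set set \<Rightarrow> nat \<Rightarrow> nat" where
  "partner W i = (THE k. {Inl i, Inr k} \<in> W)"

definition wire :: "device set set \<Rightarrow> nat set \<Rightarrow> (nat \<Rightarrow> nat) \<Rightarrow> device set set" where
  "wire B R f = B \<union> (\<lambda>i. {Inl i, Inr (f i)}) ` R"

definition matched_infected :: "nat \<Rightarrow> nat \<Rightarrow> device set set \<Rightarrow> nat set" where
  "matched_infected I S B = free_infected I B -
     (if dagger I S (card B) then {Max (free_infected I B)} else {})"

lemma bb_pairings_wire:
  "(\<And>q. q \<in> B \<Longrightarrow> q \<subseteq> range Inl) \<Longrightarrow> bb_pairings (wire B R f) = B"
  unfolding bb_pairings_def wire_def by auto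

lemma Inr_in_wire_iff:
  "(\<And>q. q \<in> B \<Longrightarrow> q \<subseteq> range Inl) \<Longrightarrow> Inr k \<in> \<Union>(wire B R f) \<longleftrightarrow> k \<in> f ` R"
  unfolding wire_def by fastforce

lemma inj_on_wire:
  assumes "\<And>q. q \<in> B \<Longrightarrow> q \<subseteq> range Inl"
  shows "inj_on (wire B R) (R \<rightarrow>\<^sub>E C)"
proof (rule inj_onI)
  fix f g assume f: "f \<in> R \<rightarrow>\<^sub>E C" and g: "g \<in> R \<rightarrow>\<^sub>E C" and eq: "wire B R f = wire B R g"
  show "f = g"
  proof (rule PiE_ext[OF f g])
    fix i assume i: "i \<in> R"
    have "{Inl i, Inr (f i)} \<in> wire B R g"
      using eq i unfolding wire_def by auto
    moreover have "{Inl i, Inr (f i)} \<notin> B"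
      using assms by blast
    ultimately obtain i' where "{Inl i, Inr (f i)} = {Inl i', Inr (g i')}"
      unfolding wire_def by blast
    then show "f i = g i" by (auto simp: doubleton_eq_iff)
  qed
qed

lemma dagger_iff_diff_eq:
  assumes "2 * j \<le> I"
  shows "dagger I S j \<longleftrightarrow> I - 2 * j = S + 1"
proof
  assume "dagger I S j"
  then have "I > S" "odd (I + S)" "j = (I - S - 1) div 2"
    unfolding dagger_def by auto
  then show "I - 2 * j = S + 1" by presburger
next
  assume "I - 2 * j = S + 1"
  then have "I = S + 1 + 2 * j" using assms by arith
  then show "dagger I S j" unfolding dagger_def by simp
qed

locale wiring_with_bb =
  fixes I S :: nat and W B :: "device set set"
  assumes admissible: "admissible I S I W"
    and bb: "bb_pairings W = B"
begin

abbreviation "R \<equiv> free_infected I B"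
abbreviation "U \<equiv> unpaired_infected I W"
abbreviation "M \<equiv> matched_infected I S B"

lemma bb_subset: "B \<subseteq> W"
  using bb unfolding bb_pairings_def by auto

lemma bb_Inl: "q \<in> B \<Longrightarrow> q \<subseteq> range Inl"
  using bb unfolding bb_pairings_def by auto

lemma pairs_disjoint: "p \<in> W \<Longrightarrow> q \<in> W \<Longrightarrow> x \<in> p \<Longrightarrow> x \<in> q \<Longrightarrow> p = q"
  by (rule admissible_disjoint[OF admissible])

lemma bb_pairE:
  assumes "q \<in> B"
  obtains a c where "q = {Inl a, Inl c}" "a \<in> {1..I}" "c \<in> {1..I}" "a < c"
proof -
  obtain a d where ad: "q = {Inl a, d}" "a \<in> {1..I}" "d \<in> devices I S" "\<forall>c. d = Inl c \<longrightarrow> a < c"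
    using admissible_initiated[OF admissible] assms bb_subset unfolding initiates_def by blast
  moreover obtain c where "d = Inl c"
    using bb_Inl[OF assms] ad(1) by auto
  ultimately show thesis using that by auto
qed

lemma non_bb_pairE:
  assumes "q \<in> W" "q \<notin> B"
  obtains a k where "q = {Inl a, Inr k}" "a \<in> {1..I}" "k \<in> {1..S}"
proof -
  obtain a d where ad: "q = {Inl a, d}" "a \<in> {1..I}" "d \<in> devices I S"
    using admissible_initiated[OF admissible assms(1)] unfolding initiates_def by blast
  moreover obtain k where "d = Inr k"
    using assms bb ad(1) unfolding bb_pairings_def by (cases d) auto
  ultimately show thesis using that by auto
qed

lemma Union_bb: "\<Union>B = Inl ` bb_infected B"
  using bb_Inl unfolding bb_infected_def by blast

lemma bb_infected_subset: "bb_infected B \<subseteq> {1..I}"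
  unfolding bb_infected_def by (auto elim: bb_pairE)

lemma free_infected_subset: "R \<subseteq> {1..I}"
  unfolding free_infected_def by auto

lemma card_bb_infected: "card (bb_infected B) = 2 * card B"
proof -
  have "card (bb_infected B) = card (\<Union>B)"
    unfolding Union_bb by (simp add: card_image)
  also have "\<dots> = (\<Sum>q\<in>B. card q)"
    using pairs_disjoint bb_subset
    by (intro card_Union_disjoint) (auto simp: pairwise_def disjnt_def elim: bb_pairE)
  also have "\<dots> = (\<Sum>q\<in>B. 2)"
    by (intro sum.cong) (auto elim: bb_pairE)
  finally show ?thesis by simp
qed

lemma two_card_bb_le: "2 * card B \<le> I"
  using card_mono[OF finite_atLeastAtMost bb_infected_subset] card_bb_infected by simp

lemma card_free_infected: "card R = I - 2 * card B"
  unfolding free_infected_def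
  using card_Diff_subset[OF finite_subset[OF bb_infected_subset] bb_infected_subset] card_bb_infected
  by simp

lemma unpaired_infected_subset: "U \<subseteq> R"
  unfolding unpaired_infected_def free_infected_def bb_infected_def using bb_subset by blast

lemma unpaired_infected_unique: "i \<in> U \<Longrightarrow> i' \<in> U \<Longrightarrow> i = i'"
  using admissible_taken_before[OF admissible, of i] taken_beforeD[of I S W i "Inl i'"]
  unfolding unpaired_infected_def by auto

lemma
  assumes "i \<in> R - U"
  shows partner_pair: "{Inl i, Inr (partner W i)} \<in> W"
    and partner_range: "partner W i \<in> {1..S}"
    and partner_unique: "{Inl i, Inr k'} \<in> W \<Longrightarrow> k' = partner W i"
proof -
  obtain q where q: "q \<in> W" "Inl i \<in> q"
    using assms unfolding free_infected_def unpaired_infected_def by auto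
  then have "q \<notin> B"
    using assms unfolding free_infected_def bb_infected_def by blast
  then obtain a k where "q = {Inl a, Inr k}" "k \<in> {1..S}"
    using non_bb_pairE[OF q(1)] by metis
  with q(2) have k: "q = {Inl i, Inr k}" "k \<in> {1..S}" by auto
  have uniq: "k' = k" if "{Inl i, Inr k'} \<in> W" for k'
  proof -
    have "{Inl i, Inr k'} = q" using pairs_disjoint[OF that q(1), of "Inl i"] q(2) by simp
    then show ?thesis using k(1) by (simp add: doubleton_eq_iff)
  qed
  have pair: "{Inl i, Inr k} \<in> W" using k(1) q(1) by simp
  moreover have "partner W i = k" unfolding partner_def using pair uniq by (rule the_equality)
  ultimately show "{Inl i, Inr (partner W i)} \<in> W" "partner W i \<in> {1..S}"
      "{Inl i, Inr k'} \<in> W \<Longrightarrow> k' = partner W i"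
    using k(2) uniq by metis+
qed

lemma wiring_eq_wire: "W = wire B (R - U) (partner W)"
proof
  show "wire B (R - U) (partner W) \<subseteq> W"
    unfolding wire_def using bb_subset partner_pair by blast
  show "W \<subseteq> wire B (R - U) (partner W)"
  proof
    fix q assume q: "q \<in> W"
    show "q \<in> wire B (R - U) (partner W)"
    proof (cases "q \<in> B")
      case False
      then obtain a k where ak: "q = {Inl a, Inr k}" "a \<in> {1..I}"
        using q by (auto elim: non_bb_pairE)
      have "a \<notin> bb_infected B"
        using pairs_disjoint[OF q] bb_subset False ak(1) unfolding bb_infected_def by blast
      then have a: "a \<in> R - U"
        using q ak unfolding free_infected_def unpaired_infected_def by auto
      then show ?thesis
        using partner_unique[OF a] q ak(1) unfolding wire_def by blast
    qed (simp add: wire_def)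
  qed
qed

lemma inj_on_partner: "inj_on (partner W) (R - U)"
proof (rule inj_onI)
  fix i i' assume i: "i \<in> R - U" and i': "i' \<in> R - U" and eq: "partner W i = partner W i'"
  have "{Inl i, Inr (partner W i)} = {Inl i', Inr (partner W i')}"
    using pairs_disjoint[OF partner_pair[OF i] partner_pair[OF i'], of "Inr (partner W i)"] eq by simp
  then show "i = i'" by (auto simp: doubleton_eq_iff)
qed

lemma Inr_paired_iff: "Inr k \<in> \<Union>W \<longleftrightarrow> k \<in> partner W ` (R - U)"
  using Union_bb by (subst wiring_eq_wire) (auto simp: wire_def)

lemma
  assumes y: "y \<in> U"
  shows partner_onto_if_unpaired: "partner W ` (R - U) = {1..S}"
    and free_below_unpaired: "i \<in> R - {y} \<Longrightarrow> i < y"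
    and bb_pair_below_unpaired: "q \<in> B \<Longrightarrow> \<exists>a<y. Inl a \<in> q"
proof -
  have U: "U = {y}" using unpaired_infected_unique y by blast
  have taken: "taken_before I S W y"
    using admissible_taken_before[OF admissible] y unfolding unpaired_infected_def by blast
  show "partner W ` (R - U) = {1..S}"
    using partner_range Inr_paired_iff taken_beforeD[OF taken, of "Inr _"] by fastforce
  show "i < y" if i: "i \<in> R - {y}"
  proof -
    have iRU: "i \<in> R - U" using i U by blast
    obtain q a where q: "q \<in> W" "Inl i \<in> q" "a < y" "Inl a \<in> q"
      using taken_beforeD[OF taken, of "Inl i"] i unfolding free_infected_def by auto
    have "q = {Inl i, Inr (partner W i)}"
      using pairs_disjoint[OF q(1) partner_pair[OF iRU] q(2)] by simp
    then show "i < y" using q(3,4) by auto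
  qed
  show "\<exists>a<y. Inl a \<in> q" if q: "q \<in> B"
  proof -
    obtain a c where ac: "q = {Inl a, Inl c}" "a \<in> {1..I}"
      using q by (auto elim: bb_pairE)
    have "a \<noteq> y"
      using q ac y unpaired_infected_subset unfolding free_infected_def bb_infected_def by blast
    then obtain q' a' where q': "q' \<in> W" "Inl a \<in> q'" "a' < y" "Inl a' \<in> q'"
      using taken_beforeD[OF taken, of "Inl a"] ac(2) by auto
    have "q' = q" using pairs_disjoint[OF q'(1) _ q'(2), of q] bb_subset q ac(1) by auto
    then show ?thesis using q' by blast
  qed
qed

lemma unpaired_infected_eq: "U = (if dagger I S (card B) then {Max R} else {})"
proof (cases "U = {}")
  case True
  have "inj_on (partner W) R" "partner W ` R \<subseteq> {1..S}"
    using inj_on_partner partner_range True by auto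
  then have "card R \<le> card {1..S}" by (intro card_inj_on_le) auto
  then have "\<not> dagger I S (card B)"
    using dagger_iff_diff_eq[OF two_card_bb_le] card_free_infected by simp
  then show ?thesis using True by simp
next
  case False
  then obtain y where y: "y \<in> U" by blast
  have U: "U = {y}" using unpaired_infected_unique y by blast
  have yR: "y \<in> R" using y unpaired_infected_subset by blast
  have "card (R - {y}) = S"
    using card_image[OF inj_on_partner] partner_onto_if_unpaired[OF y] U by simp
  then have "card R = S + 1"
    using card.remove[of R y] yR by (simp add: free_infected_def)
  then have "dagger I S (card B)"
    using dagger_iff_diff_eq[OF two_card_bb_le] card_free_infected by simp
  moreover have "Max R = y"
    using free_below_unpaired[OF y] yR
    by (intro Max_eqI) (auto simp: free_infected_def nat_less_le)
  ultimately show ?thesis using U by simp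
qed

lemma free_minus_unpaired: "R - U = M"
  unfolding unpaired_infected_eq matched_infected_def ..

lemma card_matched_infected: "card M = (if dagger I S (card B) then S else I - 2 * card B)"
proof (cases "dagger I S (card B)")
  case True
  then have "card R = S + 1"
    using dagger_iff_diff_eq[OF two_card_bb_le] card_free_infected by simp
  then have "Max R \<in> R"
    using card_gt_0_iff[of R] by (intro Max_in) auto
  then show ?thesis
    using True \<open>card R = S + 1\<close> by (simp add: matched_infected_def free_infected_def)
qed (simp add: matched_infected_def card_free_infected)

lemma matched_subset_free: "M \<subseteq> R"
  unfolding matched_infected_def by auto

lemma wire_initiated:
  assumes "N \<subseteq> R" "f \<in> N \<rightarrow> {1..S}" "q \<in> wire B N f"
  shows "\<exists>a\<in>{1..I}. initiates I S a q"
proof (cases "q \<in> B")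
  case True
  then show ?thesis using admissible_initiated[OF admissible] bb_subset by blast
next
  case False
  then obtain i where i: "i \<in> N" "q = {Inl i, Inr (f i)}"
    using assms(3) unfolding wire_def by blast
  moreover have "f i \<in> {1..S}" using assms(2) i(1) by blast
  ultimately show ?thesis
    using assms(1) free_infected_subset unfolding initiates_def
    by (intro bexI[of _ i]) auto
qed

lemma wire_pairs_disjoint:
  assumes "N \<subseteq> R" "inj_on f N"
    and "p \<in> wire B N f" "q \<in> wire B N f" "x \<in> p" "x \<in> q"
  shows "p = q"
proof -
  have new_disjoint_bb: False if "r \<in> B" "c \<in> N" "y \<in> r" "y \<in> {Inl c, Inr (f c)}" for r c y
    using that Union_bb assms(1) unfolding free_infected_def by blast
  from assms(3,4) show ?thesis
    unfolding wire_def
  proof (elim UnE imageE)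
    assume "p \<in> B" "q \<in> B"
    then show "p = q" using pairs_disjoint bb_subset assms(5,6) by blast
  next
    fix c assume "p \<in> B" "c \<in> N" "q = {Inl c, Inr (f c)}"
    then show "p = q" using new_disjoint_bb assms(5,6) by blast
  next
    fix c assume "c \<in> N" "p = {Inl c, Inr (f c)}" "q \<in> B"
    then show "p = q" using new_disjoint_bb assms(5,6) by blast
  next
    fix c c' assume "c \<in> N" "p = {Inl c, Inr (f c)}" "c' \<in> N" "q = {Inl c', Inr (f c')}"
    moreover from this have "c = c'" using assms(5,6) inj_onD[OF assms(2)] by auto
    ultimately show "p = q" by simp
  qed
qed

text \<open>The only infected device left unpaired by wire B M f is Max R, in the dagger case;
  its taken_before condition is inherited from W, where it is unpaired as well.\<close>
lemma wire_taken_before: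
  assumes f: "f \<in> M \<rightarrow>\<^sub>E {1..S}" "inj_on f M"
    and i: "i \<in> {1..I}" "Inl i \<notin> \<Union>(wire B M f)"
  shows "taken_before I S (wire B M f) i"
proof -
  have "i \<in> R - M"
    using i Union_bb unfolding wire_def free_infected_def by auto
  then have dagger: "dagger I S (card B)" and "i = Max R"
    unfolding matched_infected_def by (auto split: if_splits)
  then have unpaired: "i \<in> U" and M_eq: "M = R - {i}"
    using unpaired_infected_eq unfolding matched_infected_def by auto
  have onto: "f ` M = {1..S}"
    using card_image[OF f(2)] card_matched_infected dagger f(1)
    by (intro card_subset_eq) auto
  show ?thesis
    unfolding taken_before_def
  proof
    fix d assume d: "d \<in> devices I S - {Inl i}"
    show "\<exists>p\<in>wire B M f. d \<in> p \<and> (\<exists>a<i. Inl a \<in> p)"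
    proof (cases "d \<in> \<Union>B")
      case True
      then obtain q where "q \<in> B" "d \<in> q" by blast
      moreover from this obtain a where "a < i" "Inl a \<in> q"
        using bb_pair_below_unpaired[OF unpaired] by blast
      ultimately show ?thesis unfolding wire_def by blast
    next
      case False
      obtain c where c: "c \<in> M" "d \<in> {Inl c, Inr (f c)}"
      proof (cases d)
        case (Inl c)
        then have "c \<in> M"
          using d False Union_bb M_eq unfolding free_infected_def by auto
        then show thesis using that Inl by blast
      next
        case (Inr k)
        then have "k \<in> f ` M" using d onto by auto
        then show thesis using that Inr by blast
      qed
      moreover have "c < i" using free_below_unpaired[OF unpaired] M_eq c(1) by blast
      ultimately show ?thesis unfolding wire_def by blast
    qed
  qed
qed

lemma wire_admissible:
  assumes "f \<in> M \<rightarrow>\<^sub>E {1..S}" "inj_on f M"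
  shows "admissible I S I (wire B M f)"
  using assms matched_subset_free
  by (intro admissibleI wire_initiated wire_pairs_disjoint wire_taken_before) (auto simp: PiE_def)

lemma possible_wirings_hitting_eq:
  assumes "t \<in> {1..S}"
  shows "{W'. possible_wiring I S W' \<and> bb_pairings W' = B \<and> Inr t \<in> \<Union>W'} =
    wire B M ` {f \<in> M \<rightarrow>\<^sub>E {1..S}. inj_on f M \<and> t \<in> f ` M}"
proof
  show "{W'. possible_wiring I S W' \<and> bb_pairings W' = B \<and> Inr t \<in> \<Union>W'} \<subseteq>
      wire B M ` {f \<in> M \<rightarrow>\<^sub>E {1..S}. inj_on f M \<and> t \<in> f ` M}"
  proof
    fix W' assume "W' \<in> {W'. possible_wiring I S W' \<and> bb_pairings W' = B \<and> Inr t \<in> \<Union>W'}"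
    then have W': "possible_wiring I S W'" "bb_pairings W' = B" "Inr t \<in> \<Union>W'" by simp_all
    interpret W': wiring_with_bb I S W' B
      using W' by unfold_locales (simp_all add: possible_wiring_iff_admissible)
    have "W' = wire B M (restrict (partner W') M)"
      using W'.wiring_eq_wire W'.free_minus_unpaired by (simp add: wire_def)
    moreover have "restrict (partner W') M \<in> {f \<in> M \<rightarrow>\<^sub>E {1..S}. inj_on f M \<and> t \<in> f ` M}"
      using W'.partner_range W'.inj_on_partner W'.Inr_paired_iff W'(3) W'.free_minus_unpaired
      by auto
    ultimately show "W' \<in> wire B M ` {f \<in> M \<rightarrow>\<^sub>E {1..S}. inj_on f M \<and> t \<in> f ` M}"
      by blast
  qed
  show "wire B M ` {f \<in> M \<rightarrow>\<^sub>E {1..S}. inj_on f M \<and> t \<in> f ` M} \<subseteq>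
      {W'. possible_wiring I S W' \<and> bb_pairings W' = B \<and> Inr t \<in> \<Union>W'}"
    using wire_admissible bb_pairings_wire[OF bb_Inl] Inr_in_wire_iff[OF bb_Inl]
    by (auto simp: possible_wiring_iff_admissible)
qed

end

theorem lemma5:
  fixes I S j t :: nat and B :: "device set set"
  assumes "S \<ge> 1"
    and "L I S \<le> j" and "j \<le> I div 2"
    and "t \<in> {1..S}"
    and "card B = j"
    and "\<exists>W. possible_wiring I S W \<and> bb_pairings W = B"
  shows "card {W. possible_wiring I S W \<and> bb_pairings W = B \<and> Inr t \<in> \<Union>W} =
    (if dagger I S j then fact S
     else fact (I - 2 * j) * binom_int (S - 1) (int I - 2 * int j - 1))"
proof -
  obtain W0 where "possible_wiring I S W0" "bb_pairings W0 = B"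
    using assms(6) by blast
  then interpret wiring_with_bb I S W0 B
    by unfold_locales (simp_all add: possible_wiring_iff_admissible)
  have "card {W. possible_wiring I S W \<and> bb_pairings W = B \<and> Inr t \<in> \<Union>W} =
      card {f \<in> M \<rightarrow>\<^sub>E {1..S}. inj_on f M \<and> t \<in> f ` M}"
    unfolding possible_wirings_hitting_eq[OF assms(4)]
    by (intro card_image inj_on_subset[OF inj_on_wire[OF bb_Inl]]) auto
  also have "\<dots> = fact (card M) * binom_int (S - 1) (int (card M) - 1)"
    using card_inj_on_funcset_hitting[of M "{1..S}" t] assms(4)
    by (simp add: matched_infected_def free_infected_def)
  also have "\<dots> = (if dagger I S j then fact S
     else fact (I - 2 * j) * binom_int (S - 1) (int I - 2 * int j - 1))"
  proof -
    have "nat (int S - 1) = S - 1" using assms(1) by linarith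
    then show ?thesis
      using card_matched_infected two_card_bb_le assms(1,5)
      by (auto simp: binom_int_def of_nat_diff)
  qed
  finally show ?thesis .
qed

end
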